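(* Let $x>0$, $y>0$, and let $p=p_n=\lfloor x n^{1/2}\rfloor$ and $q=q_n=\lfloor y n^{1/2}\rfloor$. Set $$K_n=\left(\frac{2}{n}\right)^{pq/2}\prod_{j=1}^{q}\frac{\Gamma((n-j+1)/2)}{\Gamma((n-p-j+1)/2)}.$$ Then, as $n\to\infty$, $$K_n=\exp\left\{-\left(\frac{p^2q+pq^2}{4n}+\frac{xy}{4}+\frac{2x^3y+2xy^3+3x^2y^2}{24}\right)+o(1)\right\}.$$
   Context: $\Gamma$ denotes the Gamma function and $\lfloor a\rfloor$ the integer part of $a$. *)

theory Defs
  imports "HOL-Analysis.Analysis"
begin

definition pn :: "real \<Rightarrow> nat \<Rightarrow> nat" where
  "pn x n = nat \<lfloor>x * sqrt (real n)\<rfloor>"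

definition Kn :: "real \<Rightarrow> real \<Rightarrow> nat \<Rightarrow> real" where
  "Kn x y n = (let p = pn x n; q = pn y n in
     (2 / real n) powr (real p * real q / 2) *
     (\<Prod>j=1..q. Gamma ((real n - real j + 1) / 2) / Gamma ((real n - real p - real j + 1) / 2)))"

end

(* Write c = 2/n, p = 2k + r with r = p mod 2, and a_j = (n - p - j + 1)/2. The j-th factor
   c^(p/2) Gamma(a_j + p/2) / Gamma(a_j) of K_n is exactly the product of the k numbers
   1 - (2i + j + 1)/n, i < k, times, for odd p, sqrt(1 - (p + j - 1)/n) and the ratio
   Gamma(a_j + 1/2) / (sqrt(a_j) Gamma(a_j)), whose logarithm lies in [-1/(4 a_j), 0] by the
   log-convexity of Gamma. Expanding ln(1 - t) = -t - t^2/2 + O(t^3) and summing the resulting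
   polynomials in i and j exactly gives
     ln K_n = -(p^2 q + p q^2)/(4n) - q (p - r)/(4n) - (1/(2n^2)) sum_{i,j} (2i + j + 1)^2 + E
   with |E| <= q (k tau^3 + tau^2 + 1/n), tau = (p + q)/n. For p ~ x sqrt(n), q ~ y sqrt(n) the
   error is O(n^(-1/2)), the second term tends to xy/4 and the third to
   (2x^3 y + 2x y^3 + 3x^2 y^2)/24. *)

theory Submission
  imports Defs
begin

lemma ln_Gamma_add_nat:
  fixes a :: real
  assumes "a > 0"
  shows "ln (Gamma (a + real k)) = ln (Gamma a) + (\<Sum>i<k. ln (a + real i))"
proof (induction k)
  case (Suc k)
  have pos: "a + real k > 0" "Gamma (a + real k) > 0"
    using assms by auto
  have "Gamma (a + real k + 1) = (a + real k) * Gamma (a + real k)"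
    using pos by (intro Gamma_plus1) auto
  then have "Gamma (a + real (Suc k)) = (a + real k) * Gamma (a + real k)"
    by (simp add: ac_simps)
  then have "ln (Gamma (a + real (Suc k))) = ln (a + real k) + ln (Gamma (a + real k))"
    using ln_mult_pos[OF pos] by simp
  then show ?case
    using Suc.IH by simp
qed simp

lemma ln_Gamma_le_midpoint:
  fixes m h :: real
  assumes "0 \<le> h" "h < m"
  shows "ln (Gamma m) \<le> (ln (Gamma (m - h)) + ln (Gamma (m + h))) / 2"
  using convex_onD[OF log_convex_Gamma_real, of "1/2" "m - h" "m + h"] assms
  by (simp add: field_simps)

(* Wendel's inequality, from log-convexity of Gamma at a, a + 1/2, a + 1, a + 3/2. *)
lemma abs_ln_Gamma_add_half_le:
  fixes a :: real
  assumes a: "a > 0"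
  shows "\<bar>ln (Gamma (a + 1/2)) - ln (Gamma a) - ln a / 2\<bar> \<le> 1 / (4 * a)"
proof -
  have shift: "ln (Gamma (a + 1)) = ln (Gamma a) + ln a"
    "ln (Gamma (a + 3/2)) = ln (Gamma (a + 1/2)) + ln (a + 1/2)"
    using ln_Gamma_add_nat[of a 1] ln_Gamma_add_nat[of "a + 1/2" 1] a
    by (simp_all add: add.assoc)
  have upper: "ln (Gamma (a + 1/2)) \<le> (ln (Gamma a) + ln (Gamma (a + 1))) / 2"
    and lower: "ln (Gamma (a + 1)) \<le> (ln (Gamma (a + 1/2)) + ln (Gamma (a + 3/2))) / 2"
    using ln_Gamma_le_midpoint[of "1/2" "a + 1/2"] ln_Gamma_le_midpoint[of "1/2" "a + 1"] a
    by (simp_all add: algebra_simps)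
  have "ln (a + 1/2) - ln a = ln ((a + 1/2) / a)"
    using a by (simp add: ln_divide_pos)
  also have "\<dots> = ln (1 + 1 / (2 * a))"
    using a by (simp add: field_simps)
  also have "\<dots> \<le> 1 / (2 * a)"
    using a by (intro ln_add_one_self_le_self) simp
  finally have "ln (a + 1/2) - ln a \<le> 1 / (2 * a)" .
  then show ?thesis
    using upper lower shift a by (simp add: abs_le_iff)
qed

lemma real_eq_twice_div2_add_mod2: "real p = 2 * real (p div 2) + real (p mod 2)"
  by (metis of_nat_add of_nat_mult of_nat_numeral div_mult_mod_eq mult.commute)

lemma abs_ln_Gamma_add_half_nat_le:
  fixes a c :: real and p :: nat
  assumes a: "a > 0" and c: "c > 0"
  shows "\<bar>real p / 2 * ln c + ln (Gamma (a + real p / 2)) - ln (Gamma a)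
           - (\<Sum>i<p div 2. ln (c * (a + real p / 2 - 1 - real i)))
           - real (p mod 2) * ln (c * a) / 2\<bar> \<le> 1 / (4 * a)"
proof -
  define k where "k = p div 2"
  define r where "r = real (p mod 2)"
  have p_half: "real p / 2 = r / 2 + real k"
    using real_eq_twice_div2_add_mod2[of p] unfolding k_def r_def by simp
  have r: "r = 0 \<or> r = 1"
    unfolding r_def by auto
  have base: "a + r / 2 > 0"
    using a r by auto
  have "(\<Sum>i<k. ln (c * (a + real p / 2 - 1 - real i)))
      = (\<Sum>i<k. ln (c * (a + r / 2 + real (k - Suc i))))"
    by (intro sum.cong) (auto simp: p_half of_nat_diff algebra_simps)
  also have "\<dots> = (\<Sum>i<k. ln (c * (a + r / 2 + real i)))"
    by (rule sum.nat_diff_reindex)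
  also have "\<dots> = real k * ln c + (\<Sum>i<k. ln (a + r / 2 + real i))"
    using c base by (simp add: ln_mult_pos add_pos_nonneg sum.distrib)
  finally have factors: "(\<Sum>i<k. ln (c * (a + real p / 2 - 1 - real i)))
      = real k * ln c + (\<Sum>i<k. ln (a + r / 2 + real i))" .
  have shift: "ln (Gamma (a + real p / 2)) = ln (Gamma (a + r / 2)) + (\<Sum>i<k. ln (a + r / 2 + real i))"
    using ln_Gamma_add_nat[OF base, of k] by (simp add: p_half add.assoc)
  have "real p / 2 * ln c + ln (Gamma (a + real p / 2)) - ln (Gamma a)
           - (\<Sum>i<k. ln (c * (a + real p / 2 - 1 - real i))) - r * ln (c * a) / 2
      = r / 2 * ln c + ln (Gamma (a + r / 2)) - ln (Gamma a) - r * ln (c * a) / 2"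
    unfolding factors shift by (simp add: p_half algebra_simps)
  also have "\<dots> = r * (ln (Gamma (a + 1/2)) - ln (Gamma a) - ln a / 2)"
    using r a c by (auto simp: ln_mult_pos algebra_simps)
  also have "\<bar>\<dots>\<bar> \<le> 1 / (4 * a)"
    using r abs_ln_Gamma_add_half_le[OF a] a by auto
  finally show ?thesis
    unfolding k_def r_def .
qed

lemma abs_ln_one_minus_add_le:
  fixes t :: real
  assumes "0 \<le> t" "t \<le> 1/2"
  shows "\<bar>ln (1 - t) + t\<bar> \<le> 2 * t^2"
  using ln_one_minus_pos_lower_bound[OF assms] ln_one_minus_pos_upper_bound[of t] assms
  by (simp add: abs_le_iff)

lemma abs_ln_one_minus_taylor_le:
  fixes t :: real
  assumes t: "0 \<le> t" "t \<le> 1/2"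
  shows "\<bar>ln (1 - t) + t + t^2 / 2\<bar> \<le> t^3"
proof -
  define g where "g s = ln (1 - s) + s + s^2 / 2" for s :: real
  have g': "(g has_real_derivative - (s^2 / (1 - s))) (at s)" if "s < 1" for s
    unfolding g_def using that
    by (auto intro!: derivative_eq_intros simp: field_simps power2_eq_square)
  have "g t \<le> g 0"
  proof (rule DERIV_nonpos_imp_nonincreasing[OF t(1)])
    fix s assume "0 \<le> s" "s \<le> t"
    then show "\<exists>y. DERIV g s :> y \<and> y \<le> 0"
      using g'[of s] t by auto
  qed
  moreover have "(\<lambda>s. g s + s^3) 0 \<le> (\<lambda>s. g s + s^3) t"
  proof (rule DERIV_nonneg_imp_nondecreasing[OF t(1)])
    fix s assume s: "0 \<le> s" "s \<le> t"
    have "- (s^2 / (1 - s)) + 3 * s^2 = s^2 * (2 - 3 * s) / (1 - s)"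
      using s t by (simp add: field_simps power2_eq_square)
    also have "\<dots> \<ge> 0"
      using s t by (intro divide_nonneg_pos mult_nonneg_nonneg) auto
    finally have "- (s^2 / (1 - s)) + 3 * s^2 \<ge> 0" .
    moreover have "((\<lambda>s. g s + s^3) has_real_derivative - (s^2 / (1 - s)) + 3 * s^2) (at s)"
      using s t g'[of s] by (intro derivative_eq_intros) auto
    ultimately show "\<exists>y. DERIV (\<lambda>s. g s + s^3) s :> y \<and> y \<ge> 0"
      by blast
  qed
  ultimately show ?thesis
    by (simp add: g_def abs_le_iff)
qed

lemma abs_sum_ln_one_minus_taylor_le:
  fixes t :: "'a \<Rightarrow> real"
  assumes t: "\<And>i. i \<in> I \<Longrightarrow> 0 \<le> t i \<and> t i \<le> \<tau>" and "\<tau> \<le> 1/2"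
  shows "\<bar>\<Sum>i\<in>I. ln (1 - t i) + t i + (t i)^2 / 2\<bar> \<le> real (card I) * \<tau>^3"
proof -
  have "\<bar>\<Sum>i\<in>I. ln (1 - t i) + t i + (t i)^2 / 2\<bar> \<le> (\<Sum>i\<in>I. \<bar>ln (1 - t i) + t i + (t i)^2 / 2\<bar>)"
    by (rule sum_abs)
  also have "\<dots> \<le> (\<Sum>i\<in>I. \<tau>^3)"
  proof (rule sum_mono)
    fix i assume "i \<in> I"
    then have "0 \<le> t i" "t i \<le> \<tau>"
      using t by auto
    then have "\<bar>ln (1 - t i) + t i + (t i)^2 / 2\<bar> \<le> (t i)^3"
      using \<open>\<tau> \<le> 1/2\<close> by (intro abs_ln_one_minus_taylor_le) auto
    also have "\<dots> \<le> \<tau>^3"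
      using \<open>0 \<le> t i\<close> \<open>t i \<le> \<tau>\<close> by (intro power_mono) auto
    finally show "\<bar>ln (1 - t i) + t i + (t i)^2 / 2\<bar> \<le> \<tau>^3" .
  qed
  finally show ?thesis
    by simp
qed

definition Kpq :: "nat \<Rightarrow> nat \<Rightarrow> nat \<Rightarrow> real" where
  "Kpq n p q = (2 / real n) powr (real p * real q / 2) *
     (\<Prod>j=1..q. Gamma ((real n - real j + 1) / 2) / Gamma ((real n - real p - real j + 1) / 2))"

lemma Kn_eq_Kpq: "Kn x y n = Kpq n (pn x n) (pn y n)"
  by (simp add: Kn_def Kpq_def Let_def)

lemma Kpq_pos_ln:
  assumes "p + q < n"
  shows "Kpq n p q > 0"
    and "ln (Kpq n p q) = (\<Sum>j=1..q. real p / 2 * ln (2 / real n)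
           + ln (Gamma ((real n - real j + 1) / 2)) - ln (Gamma ((real n - real p - real j + 1) / 2)))"
proof -
  define c where "c = 2 / real n"
  define ratio where "ratio j = Gamma ((real n - real j + 1) / 2) / Gamma ((real n - real p - real j + 1) / 2)"
    for j :: nat
  have Gamma_pos: "Gamma ((real n - real j + 1) / 2) > 0" "Gamma ((real n - real p - real j + 1) / 2) > 0"
    if "j \<in> {1..q}" for j
    using that assms by auto
  then have ratio_pos: "ratio j > 0" if "j \<in> {1..q}" for j
    using that unfolding ratio_def by simp
  have c: "c > 0"
    using assms by (simp add: c_def)
  have K: "Kpq n p q = c powr (real p * real q / 2) * prod ratio {1..q}"
    unfolding Kpq_def c_def ratio_def ..
  have prod_ratio: "prod ratio {1..q} > 0"
    using ratio_pos by (rule prod_pos)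
  show "Kpq n p q > 0"
    unfolding K using c prod_ratio by simp
  have ln_prod_ratio: "ln (prod ratio {1..q}) = (\<Sum>j=1..q. ln (ratio j))"
    by (rule ln_prod) (use ratio_pos in force)+
  have "ln (Kpq n p q) = ln (c powr (real p * real q / 2)) + ln (prod ratio {1..q})"
    unfolding K using c prod_ratio by (simp add: ln_mult_pos)
  also have "\<dots> = real p * real q / 2 * ln c + (\<Sum>j=1..q. ln (ratio j))"
    unfolding ln_prod_ratio using c by (simp add: ln_powr)
  also have "\<dots> = (\<Sum>j=1..q. real p / 2 * ln c + ln (ratio j))"
    unfolding sum.distrib by simp
  also have "\<dots> = (\<Sum>j=1..q. real p / 2 * ln c
           + ln (Gamma ((real n - real j + 1) / 2)) - ln (Gamma ((real n - real p - real j + 1) / 2)))"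
    using Gamma_pos by (intro sum.cong) (simp_all add: ratio_def ln_divide_pos)
  finally show "ln (Kpq n p q) = \<dots>"
    unfolding c_def .
qed

lemma sum_sum_linear:
  "(\<Sum>j=1..q. \<Sum>i<k. 2 * real i + real j + 1) = real k * real q * (2 * real k + real q + 1) / 2"
proof -
  have inner: "(\<Sum>i<k. 2 * real i + d + 1) = real k * (real k + d)" for d :: real
    by (induction k) (simp_all add: algebra_simps)
  show ?thesis
    by (induction q) (simp_all add: inner del: of_nat_Suc, simp add: field_simps)
qed

lemma sum_sum_square:
  "(\<Sum>j=1..q. \<Sum>i<k. (2 * real i + real j + 1)^2)
     = real k * real q * (8 * real k^2 + 6 * real k * real q + 2 * real q^2 + 6 * real k + 3 * real q - 1) / 6"
proof -
  have inner: "(\<Sum>i<k. (2 * real i + d + 1)^2)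
      = real k * ((4 * real k^2 - 6 * real k + 2) / 3 + 2 * (d + 1) * (real k - 1) + (d + 1)^2)" for d :: real
    by (induction k) (simp_all add: field_simps power2_eq_square)
  show ?thesis
    by (induction q) (simp_all add: inner del: of_nat_Suc, simp add: field_simps power2_eq_square)
qed

lemma sum_shifted_linear: "(\<Sum>j=1..q. real p + real j - 1) = real q * (2 * real p + real q - 1) / 2"
  by (induction q) (simp_all add: field_simps)

lemma abs_ln_Kpq_factor_le:
  fixes n p j :: nat
  assumes j: "1 \<le> j" and small: "2 * (p + j) \<le> n"
  shows "\<bar>real p / 2 * ln (2 / real n) + ln (Gamma ((real n - real j + 1) / 2))
            - ln (Gamma ((real n - real p - real j + 1) / 2))
            - (\<Sum>i<p div 2. ln (1 - (2 * real i + real j + 1) / real n))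
            - real (p mod 2) * ln (1 - (real p + real j - 1) / real n) / 2\<bar> \<le> 1 / real n"
proof -
  define a where "a = (real n - real p - real j + 1) / 2"
  have n: "real n > 0"
    using j small by simp
  have a: "a > 0" "1 / (4 * a) \<le> 1 / real n"
    using small n unfolding a_def by (auto simp: field_simps)
  have top: "a + real p / 2 = (real n - real j + 1) / 2"
    and bottom: "2 / real n * a = 1 - (real p + real j - 1) / real n"
    and factor: "\<And>i. 2 / real n * (a + real p / 2 - 1 - real i) = 1 - (2 * real i + real j + 1) / real n"
    using n unfolding a_def by (simp_all add: field_simps)
  show ?thesis
    using abs_ln_Gamma_add_half_nat_le[OF a(1), of "2 / real n" p, unfolded factor bottom, unfolded top]
      n a(2) unfolding a_def by simp
qed

lemma abs_ln_Kpq_factor_approx: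
  fixes n p j :: nat
  assumes j: "1 \<le> j" and small: "2 * (p + j) \<le> n"
  defines "\<tau> \<equiv> real (p + j) / real n"
  shows "\<bar>real p / 2 * ln (2 / real n) + ln (Gamma ((real n - real j + 1) / 2))
            - ln (Gamma ((real n - real p - real j + 1) / 2))
          + (\<Sum>i<p div 2. (2 * real i + real j + 1) / real n)
          + (\<Sum>i<p div 2. ((2 * real i + real j + 1) / real n)^2) / 2
          + real (p mod 2) * ((real p + real j - 1) / real n) / 2\<bar>
        \<le> real (p div 2) * \<tau>^3 + \<tau>^2 + 1 / real n"
proof -
  define k where "k = p div 2"
  define r where "r = real (p mod 2)"
  define t where "t i = (2 * real i + real j + 1) / real n" for i :: nat
  define S where "S = (real p + real j - 1) / real n"
  have n: "real n > 0"
    using j small by simp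
  have \<tau>: "\<tau> \<le> 1/2"
    using small n unfolding \<tau>_def by (simp add: field_simps)
  have t: "0 \<le> t i \<and> t i \<le> \<tau>" if "i < k" for i
  proof -
    have "2 * i + j + 1 \<le> p + j"
      using that unfolding k_def by linarith
    then show ?thesis
      using n unfolding t_def \<tau>_def by (simp add: divide_right_mono flip: of_nat_le_iff)
  qed
  have S: "0 \<le> S" "S \<le> \<tau>"
    using j n unfolding S_def \<tau>_def by (simp_all add: divide_right_mono)
  define G where "G = real p / 2 * ln (2 / real n) + ln (Gamma ((real n - real j + 1) / 2))
    - ln (Gamma ((real n - real p - real j + 1) / 2)) - (\<Sum>i<k. ln (1 - t i)) - r * ln (1 - S) / 2"
  define L where "L = (\<Sum>i<k. ln (1 - t i) + t i + (t i)^2 / 2)"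
  define P where "P = r * (ln (1 - S) + S) / 2"
  have "\<bar>G\<bar> \<le> 1 / real n"
    using abs_ln_Kpq_factor_le[OF j small] unfolding G_def k_def r_def t_def S_def .
  moreover have "\<bar>L\<bar> \<le> real k * \<tau>^3"
    using abs_sum_ln_one_minus_taylor_le[of "{..<k}" t \<tau>] t \<tau> unfolding L_def by simp
  moreover have "\<bar>P\<bar> \<le> \<tau>^2"
  proof -
    have "\<bar>ln (1 - S) + S\<bar> \<le> 2 * S^2"
      using S \<tau> by (intro abs_ln_one_minus_add_le) auto
    moreover have "S^2 \<le> \<tau>^2"
      using S by (intro power_mono)
    moreover have "r = 0 \<or> r = 1"
      unfolding r_def by auto
    ultimately show ?thesis
      unfolding P_def by auto
  qed
  moreover have "real p / 2 * ln (2 / real n) + ln (Gamma ((real n - real j + 1) / 2))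
            - ln (Gamma ((real n - real p - real j + 1) / 2))
          + (\<Sum>i<k. t i) + (\<Sum>i<k. (t i)^2) / 2 + r * S / 2 = G + L + P"
    unfolding G_def L_def P_def by (simp add: sum.distrib sum_divide_distrib algebra_simps)
  ultimately show ?thesis
    unfolding k_def r_def t_def S_def by linarith
qed

lemma sum_Kpq_factor_main_terms:
  fixes n p q :: nat
  assumes "n > 0"
  defines "k \<equiv> real (p div 2)"
  shows "(\<Sum>j=1..q. (\<Sum>i<p div 2. 2 * real i + real j + 1) / real n
            + (\<Sum>i<p div 2. (2 * real i + real j + 1)^2) / (2 * real n^2)
            + real (p mod 2) * (real p + real j - 1) / (2 * real n))
        = (real p^2 * real q + real p * real q^2) / (4 * real n)
           + real q * (real p - real (p mod 2)) / (4 * real n)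
           + k * real q * (8 * k^2 + 6 * k * real q + 2 * real q^2 + 6 * k + 3 * real q - 1)
               / (12 * real n^2)"
proof -
  define r where "r = real (p mod 2)"
  define A where "A j = (\<Sum>i<p div 2. 2 * real i + real j + 1)" for j :: nat
  define B where "B j = (\<Sum>i<p div 2. (2 * real i + real j + 1)^2)" for j :: nat
  have "(\<Sum>j=1..q. A j / real n + B j / (2 * real n^2) + r * (real p + real j - 1) / (2 * real n))
      = (\<Sum>j=1..q. A j) / real n + (\<Sum>j=1..q. B j) / (2 * real n^2)
        + r * (\<Sum>j=1..q. real p + real j - 1) / (2 * real n)"
    by (simp only: sum.distrib sum_divide_distrib sum_distrib_left)
  also have "\<dots> = (real p^2 * real q + real p * real q^2) / (4 * real n)
           + real q * (real p - r) / (4 * real n)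
           + k * real q * (8 * k^2 + 6 * k * real q + 2 * real q^2 + 6 * k + 3 * real q - 1)
               / (12 * real n^2)"
    unfolding A_def B_def sum_sum_linear sum_sum_square sum_shifted_linear
    using real_eq_twice_div2_add_mod2[of p] assms unfolding k_def r_def
    by (auto simp: field_simps power2_eq_square)
  finally show ?thesis
    unfolding A_def B_def r_def .
qed

lemma abs_ln_Kpq_approx:
  fixes n p q :: nat
  assumes small: "2 * (p + q) < n"
  defines "k \<equiv> real (p div 2)" and "\<tau> \<equiv> real (p + q) / real n"
  shows "\<bar>ln (Kpq n p q) + (real p^2 * real q + real p * real q^2) / (4 * real n)
           + real q * (real p - real (p mod 2)) / (4 * real n)
           + k * real q * (8 * k^2 + 6 * k * real q + 2 * real q^2 + 6 * k + 3 * real q - 1)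
               / (12 * real n^2)\<bar>
        \<le> real q * (k * \<tau>^3 + \<tau>^2 + 1 / real n)"
proof -
  define X where "X j = real p / 2 * ln (2 / real n) + ln (Gamma ((real n - real j + 1) / 2))
    - ln (Gamma ((real n - real p - real j + 1) / 2))" for j :: nat
  define Y where "Y j = (\<Sum>i<p div 2. 2 * real i + real j + 1) / real n
    + (\<Sum>i<p div 2. (2 * real i + real j + 1)^2) / (2 * real n^2)
    + real (p mod 2) * (real p + real j - 1) / (2 * real n)" for j :: nat
  have n: "real n > 0"
    using small by simp
  have "\<bar>X j + Y j\<bar> \<le> k * \<tau>^3 + \<tau>^2 + 1 / real n" if j: "j \<in> {1..q}" for j
  proof -
    have "0 \<le> real (p + j) / real n" "real (p + j) / real n \<le> \<tau>"
      using j n unfolding \<tau>_def by (simp_all add: divide_right_mono)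
    then have "k * (real (p + j) / real n)^3 + (real (p + j) / real n)^2 \<le> k * \<tau>^3 + \<tau>^2"
      unfolding k_def by (intro add_mono mult_left_mono power_mono) auto
    moreover have "\<bar>X j + Y j\<bar> \<le> k * (real (p + j) / real n)^3 + (real (p + j) / real n)^2 + 1 / real n"
      using abs_ln_Kpq_factor_approx[of j p n] j small unfolding X_def Y_def k_def
      by (simp add: add.assoc sum_divide_distrib power_divide mult.commute)
    ultimately show ?thesis
      by linarith
  qed
  then have "\<bar>\<Sum>j=1..q. X j + Y j\<bar> \<le> (\<Sum>j=1..q. k * \<tau>^3 + \<tau>^2 + 1 / real n)"
    by (intro order_trans[OF sum_abs sum_mono])
  moreover have "(\<Sum>j=1..q. X j + Y j) = ln (Kpq n p q) + (\<Sum>j=1..q. Y j)"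
    using Kpq_pos_ln(2)[of p q n] small unfolding X_def by (simp add: sum.distrib)
  ultimately show ?thesis
    using sum_Kpq_factor_main_terms[of n p q] n unfolding Y_def k_def by (simp add: add.assoc)
qed

lemma inverse_sqrt_tendsto_0: "(\<lambda>n. 1 / sqrt (real n)) \<longlonglongrightarrow> 0"
  by (intro tendsto_divide_0[OF tendsto_const] filterlim_at_top_imp_at_infinity
      filterlim_compose[OF sqrt_at_top filterlim_real_sequentially])

lemma pn_over_sqrt_tendsto:
  assumes "x \<ge> 0"
  shows "(\<lambda>n. real (pn x n) / sqrt (real n)) \<longlonglongrightarrow> x"
proof (rule tendsto_sandwich)
  have floor: "real (pn x n) = of_int \<lfloor>x * sqrt (real n)\<rfloor>" for n
    using assms unfolding pn_def by simp
  show "\<forall>\<^sub>F n in sequentially. x - 1 / sqrt (real n) \<le> real (pn x n) / sqrt (real n)"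
    using eventually_gt_at_top[of 0]
  proof eventually_elim
    case (elim n)
    have "x - 1 / sqrt (real n) = (x * sqrt (real n) - 1) / sqrt (real n)"
      using elim by (simp add: field_simps)
    also have "\<dots> \<le> real (pn x n) / sqrt (real n)"
      unfolding floor by (intro divide_right_mono) (linarith, simp)
    finally show ?case .
  qed
  show "\<forall>\<^sub>F n in sequentially. real (pn x n) / sqrt (real n) \<le> x"
  proof (intro always_eventually allI)
    fix n
    have "real (pn x n) \<le> x * sqrt (real n)"
      unfolding floor by linarith
    then show "real (pn x n) / sqrt (real n) \<le> x"
      using assms by (cases "n = 0") (simp_all add: field_simps)
  qed
  show "(\<lambda>n. x - 1 / sqrt (real n)) \<longlonglongrightarrow> x"
    using tendsto_diff[OF tendsto_const inverse_sqrt_tendsto_0, of x] by simp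
qed simp

lemma eventually_twice_sum_less:
  fixes p q :: "nat \<Rightarrow> nat"
  assumes p: "(\<lambda>n. real (p n) / sqrt (real n)) \<longlonglongrightarrow> x"
    and q: "(\<lambda>n. real (q n) / sqrt (real n)) \<longlonglongrightarrow> y"
  shows "\<forall>\<^sub>F n in sequentially. 2 * (p n + q n) < n"
proof -
  have "(\<lambda>n. (real (p n) / sqrt (real n) + real (q n) / sqrt (real n)) * (1 / sqrt (real n)))
      \<longlonglongrightarrow> (x + y) * 0"
    by (intro tendsto_intros p q inverse_sqrt_tendsto_0)
  then have "\<forall>\<^sub>F n in sequentially.
      (real (p n) / sqrt (real n) + real (q n) / sqrt (real n)) * (1 / sqrt (real n)) < 1/2"
    by (rule order_tendstoD) simp
  then show ?thesis
    using eventually_gt_at_top[of 0]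
  proof eventually_elim
    case (elim n)
    then have "real (2 * (p n + q n)) < real n"
      by (simp add: field_simps)
    then show ?case
      by (simp only: of_nat_less_iff)
  qed
qed

lemma mod2_over_sqrt_tendsto_0: "(\<lambda>n. real (f n mod 2) / sqrt (real n)) \<longlonglongrightarrow> 0"
proof (rule Lim_null_comparison[OF always_eventually inverse_sqrt_tendsto_0])
  show "\<forall>n. norm (real (f n mod 2) / sqrt (real n)) \<le> 1 / sqrt (real n)"
    by (auto intro: divide_right_mono)
qed

lemma div2_over_sqrt_tendsto:
  assumes "(\<lambda>n. real (f n) / sqrt (real n)) \<longlonglongrightarrow> x"
  shows "(\<lambda>n. real (f n div 2) / sqrt (real n)) \<longlonglongrightarrow> x / 2"
proof -
  have eq: "real (f n div 2) / sqrt (real n)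
      = (real (f n) / sqrt (real n) - real (f n mod 2) / sqrt (real n)) / 2" for n
    using real_eq_twice_div2_add_mod2[of "f n"] by (simp add: diff_divide_distrib[symmetric])
  have "(\<lambda>n. (real (f n) / sqrt (real n) - real (f n mod 2) / sqrt (real n)) / 2) \<longlonglongrightarrow> (x - 0) / 2"
    by (intro tendsto_intros assms mod2_over_sqrt_tendsto_0) simp
  then show ?thesis
    by (simp add: eq)
qed

lemma Kpq_remainder_tendsto_0:
  fixes p q :: "nat \<Rightarrow> nat"
  assumes p: "(\<lambda>n. real (p n) / sqrt (real n)) \<longlonglongrightarrow> x"
    and q: "(\<lambda>n. real (q n) / sqrt (real n)) \<longlonglongrightarrow> y"
  shows "(\<lambda>n. ln (Kpq n (p n) (q n))
            + ((real (p n))^2 * real (q n) + real (p n) * (real (q n))^2) / (4 * real n)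
            + real (q n) * (real (p n) - real (p n mod 2)) / (4 * real n)
            + real (p n div 2) * real (q n) * (8 * real (p n div 2)^2 + 6 * real (p n div 2) * real (q n)
                + 2 * real (q n)^2 + 6 * real (p n div 2) + 3 * real (q n) - 1) / (12 * real n^2))
          \<longlonglongrightarrow> 0"
proof (rule Lim_null_comparison)
  define s where "s n = sqrt (real n)" for n :: nat
  define a where "a n = real (p n) / s n" for n
  define b where "b n = real (q n) / s n" for n
  define u where "u n = real (p n div 2) / s n" for n
  define w where "w n = 1 / s n" for n
  have scale: "Q * (K * ((P + Q) / S^2)^3 + ((P + Q) / S^2)^2 + 1 / S^2)
      = Q / S * (1 / S) * (K / S * (P / S + Q / S)^3 + (P / S + Q / S)^2 + 1)"
    if "S > 0" for S P Q K :: real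
    using that by (simp add: add_divide_distrib[symmetric] power_divide divide_simps) algebra
  show "\<forall>\<^sub>F n in sequentially. norm (ln (Kpq n (p n) (q n))
            + ((real (p n))^2 * real (q n) + real (p n) * (real (q n))^2) / (4 * real n)
            + real (q n) * (real (p n) - real (p n mod 2)) / (4 * real n)
            + real (p n div 2) * real (q n) * (8 * real (p n div 2)^2 + 6 * real (p n div 2) * real (q n)
                + 2 * real (q n)^2 + 6 * real (p n div 2) + 3 * real (q n) - 1) / (12 * real n^2))
        \<le> b n * w n * (u n * (a n + b n)^3 + (a n + b n)^2 + 1)"
    using eventually_twice_sum_less[OF p q]
  proof eventually_elim
    case (elim n)
    have "s n > 0" "real n = (s n)^2"
      using elim unfolding s_def by simp_all
    then have "real (q n) * (real (p n div 2) * (real (p n + q n) / real n)^3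
        + (real (p n + q n) / real n)^2 + 1 / real n)
      = b n * w n * (u n * (a n + b n)^3 + (a n + b n)^2 + 1)"
      using scale[where S = "s n" and P = "real (p n)" and Q = "real (q n)" and K = "real (p n div 2)"]
      unfolding a_def b_def u_def w_def by simp
    with abs_ln_Kpq_approx[OF elim] show ?case
      by simp
  qed
  have "a \<longlonglongrightarrow> x" "b \<longlonglongrightarrow> y" "u \<longlonglongrightarrow> x / 2" "w \<longlonglongrightarrow> 0"
    using p q div2_over_sqrt_tendsto[OF p] inverse_sqrt_tendsto_0
    unfolding a_def b_def u_def w_def s_def .
  then show "(\<lambda>n. b n * w n * (u n * (a n + b n)^3 + (a n + b n)^2 + 1)) \<longlonglongrightarrow> 0"
    by (auto intro!: tendsto_eq_intros)
qed

lemma parity_term_tendsto: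
  fixes p q :: "nat \<Rightarrow> nat"
  assumes p: "(\<lambda>n. real (p n) / sqrt (real n)) \<longlonglongrightarrow> x"
    and q: "(\<lambda>n. real (q n) / sqrt (real n)) \<longlonglongrightarrow> y"
  shows "(\<lambda>n. real (q n) * (real (p n) - real (p n mod 2)) / (4 * real n)) \<longlonglongrightarrow> x * y / 4"
proof -
  have eq: "real (q n) * (real (p n) - real (p n mod 2)) / (4 * real n)
      = real (q n) / sqrt (real n) * (real (p n) / sqrt (real n) - real (p n mod 2) / sqrt (real n)) / 4"
    for n
    by (simp add: diff_divide_distrib[symmetric] times_divide_times_eq)
  have "(\<lambda>n. real (q n) / sqrt (real n) * (real (p n) / sqrt (real n) - real (p n mod 2) / sqrt (real n)) / 4)
      \<longlonglongrightarrow> y * (x - 0) / 4"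
    by (intro tendsto_intros p q mod2_over_sqrt_tendsto_0) simp
  then show ?thesis
    unfolding eq by (simp add: mult.commute)
qed

lemma square_sum_term_tendsto:
  fixes p q :: "nat \<Rightarrow> nat"
  assumes p: "(\<lambda>n. real (p n) / sqrt (real n)) \<longlonglongrightarrow> x"
    and q: "(\<lambda>n. real (q n) / sqrt (real n)) \<longlonglongrightarrow> y"
  shows "(\<lambda>n. real (p n div 2) * real (q n) * (8 * real (p n div 2)^2 + 6 * real (p n div 2) * real (q n)
            + 2 * real (q n)^2 + 6 * real (p n div 2) + 3 * real (q n) - 1) / (12 * real n^2))
          \<longlonglongrightarrow> (2 * x^3 * y + 2 * x * y^3 + 3 * x^2 * y^2) / 24"
proof -
  define s where "s n = sqrt (real n)" for n :: nat
  define u where "u n = real (p n div 2) / s n" for n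
  define b where "b n = real (q n) / s n" for n
  define w where "w n = 1 / s n" for n
  have scale: "K * Q * (8 * K^2 + 6 * K * Q + 2 * Q^2 + 6 * K + 3 * Q - 1) / (12 * (S^2)^2)
      = K / S * (Q / S) * (8 * (K / S)^2 + 6 * (K / S) * (Q / S) + 2 * (Q / S)^2
          + (6 * (K / S) + 3 * (Q / S)) * (1 / S) - (1 / S)^2) / 12"
    if "S > 0" for S K Q :: real
    using that by (simp add: power_divide divide_simps) algebra
  have eq: "real (p n div 2) * real (q n) * (8 * real (p n div 2)^2 + 6 * real (p n div 2) * real (q n)
        + 2 * real (q n)^2 + 6 * real (p n div 2) + 3 * real (q n) - 1) / (12 * real n^2)
      = u n * b n * (8 * u n^2 + 6 * u n * b n + 2 * b n^2 + (6 * u n + 3 * b n) * w n - w n^2) / 12"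
    for n
  proof (cases "n = 0")
    case False
    then have "s n > 0" "real n = (s n)^2"
      unfolding s_def by simp_all
    then show ?thesis
      using scale[where S = "s n" and K = "real (p n div 2)" and Q = "real (q n)"]
      unfolding u_def b_def w_def by simp
  qed (simp add: u_def b_def w_def s_def)
  have "u \<longlonglongrightarrow> x / 2" "b \<longlonglongrightarrow> y" "w \<longlonglongrightarrow> 0"
    using div2_over_sqrt_tendsto[OF p] q inverse_sqrt_tendsto_0 unfolding u_def b_def w_def s_def .
  then have "(\<lambda>n. u n * b n * (8 * u n^2 + 6 * u n * b n + 2 * b n^2 + (6 * u n + 3 * b n) * w n - w n^2) / 12)
      \<longlonglongrightarrow> x / 2 * y * (8 * (x / 2)^2 + 6 * (x / 2) * y + 2 * y^2 + (6 * (x / 2) + 3 * y) * 0 - 0^2) / 12"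
    by (intro tendsto_intros) simp_all
  also have "x / 2 * y * (8 * (x / 2)^2 + 6 * (x / 2) * y + 2 * y^2 + (6 * (x / 2) + 3 * y) * 0 - 0^2) / 12
      = (2 * x^3 * y + 2 * x * y^3 + 3 * x^2 * y^2) / 24"
    by (simp add: field_simps power2_eq_square power3_eq_cube)
  finally show ?thesis
    unfolding eq .
qed

lemma ln_Kpq_asymptotics:
  fixes p q :: "nat \<Rightarrow> nat" and x y :: real
  assumes p: "(\<lambda>n. real (p n) / sqrt (real n)) \<longlonglongrightarrow> x"
    and q: "(\<lambda>n. real (q n) / sqrt (real n)) \<longlonglongrightarrow> y"
  shows "(\<lambda>n. ln (Kpq n (p n) (q n))
            + ((real (p n))^2 * real (q n) + real (p n) * (real (q n))^2) / (4 * real n)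
            + x * y / 4 + (2 * x^3 * y + 2 * x * y^3 + 3 * x^2 * y^2) / 24) \<longlonglongrightarrow> 0"
  using tendsto_add[OF tendsto_diff[OF tendsto_diff[OF Kpq_remainder_tendsto_0[OF p q]
          parity_term_tendsto[OF p q]] square_sum_term_tendsto[OF p q]],
        OF tendsto_const[of "x * y / 4 + (2 * x^3 * y + 2 * x * y^3 + 3 * x^2 * y^2) / 24"]]
  by (simp add: algebra_simps)

theorem lemma2p6:
  fixes x y :: real
  assumes "x > 0" and "y > 0"
  shows "\<exists>e :: nat \<Rightarrow> real. e \<longlonglongrightarrow> 0 \<and>
    (\<forall>\<^sub>F n in sequentially.
       Kn x y n = exp (- (((real (pn x n))^2 * real (pn y n) + real (pn x n) * (real (pn y n))^2) / (4 * real n)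
                       + x * y / 4 + (2 * x^3 * y + 2 * x * y^3 + 3 * x^2 * y^2) / 24) + e n))"
proof -
  have p: "(\<lambda>n. real (pn x n) / sqrt (real n)) \<longlonglongrightarrow> x"
    and q: "(\<lambda>n. real (pn y n) / sqrt (real n)) \<longlonglongrightarrow> y"
    using assms by (simp_all add: pn_over_sqrt_tendsto)
  define e where "e n = ln (Kn x y n)
    + (((real (pn x n))^2 * real (pn y n) + real (pn x n) * (real (pn y n))^2) / (4 * real n)
       + x * y / 4 + (2 * x^3 * y + 2 * x * y^3 + 3 * x^2 * y^2) / 24)" for n
  have "e \<longlonglongrightarrow> 0"
    using ln_Kpq_asymptotics[OF p q] unfolding e_def Kn_eq_Kpq by (simp add: add.assoc)
  moreover have "\<forall>\<^sub>F n in sequentially.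
       Kn x y n = exp (- (((real (pn x n))^2 * real (pn y n) + real (pn x n) * (real (pn y n))^2) / (4 * real n)
                       + x * y / 4 + (2 * x^3 * y + 2 * x * y^3 + 3 * x^2 * y^2) / 24) + e n)"
    using eventually_twice_sum_less[OF p q]
  proof eventually_elim
    case (elim n)
    then have "Kn x y n > 0"
      unfolding Kn_eq_Kpq by (intro Kpq_pos_ln(1)) simp
    then show ?case
      by (simp add: e_def)
  qed
  ultimately show ?thesis
    by blast
qed

end
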